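(* Let $\mathcal H$ be a real Hilbert space, $k\ge1$, and let $\mathbf{x}_1,\ldots,\mathbf{x}_k\in\mathcal H$ be norm one vectors with $\dim(\operatorname{span}\{\mathbf{x}_1,\ldots,\mathbf{x}_k\})\le 2$. Then there is a nonzero continuous symmetric $k$-linear form $T$ on $\mathcal H$ attaining its norm at $(\mathbf{x}_1,\ldots,\mathbf{x}_k)$.
   Context: $\|T\|=\sup\{|T(\mathbf{w}_1,\ldots,\mathbf{w}_k)|:\|\mathbf{w}_i\|\le1\}$, and $T$ attains its norm at $(\mathbf{x}_1,\ldots,\mathbf{x}_k)$ if $|T(\mathbf{x}_1,\ldots,\mathbf{x}_k)|=\|T\|$. *)

theory Defs
  imports "HOL-Analysis.Analysis"
begin

text \<open>A k-linear form on a real vector space V is modelled as a function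
  T :: (nat \<Rightarrow> V) \<Rightarrow> real that only depends on the first k arguments
  w 0, ..., w (k-1) and is linear in each of them separately.\<close>

definition multilinear_form :: "nat \<Rightarrow> ((nat \<Rightarrow> 'a::real_vector) \<Rightarrow> real) \<Rightarrow> bool" where
  "multilinear_form k T \<longleftrightarrow>
     (\<forall>w w'. (\<forall>i<k. w i = w' i) \<longrightarrow> T w = T w') \<and>
     (\<forall>i<k. \<forall>w. linear (\<lambda>v. T (w(i := v))))"

text \<open>Continuity of a multilinear form (equivalently, boundedness).\<close>
definition bounded_mform :: "nat \<Rightarrow> ((nat \<Rightarrow> 'a::real_normed_vector) \<Rightarrow> real) \<Rightarrow> bool" where
  "bounded_mform k T \<longleftrightarrow> (\<exists>C. \<forall>w. \<bar>T w\<bar> \<le> C * (\<Prod>i<k. norm (w i)))"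

definition symmetric_mform :: "nat \<Rightarrow> ((nat \<Rightarrow> 'a) \<Rightarrow> real) \<Rightarrow> bool" where
  "symmetric_mform k T \<longleftrightarrow> (\<forall>\<sigma> w. \<sigma> permutes {..<k} \<longrightarrow> T (w \<circ> \<sigma>) = T w)"

definition mform_norm :: "nat \<Rightarrow> ((nat \<Rightarrow> 'a::real_normed_vector) \<Rightarrow> real) \<Rightarrow> real" where
  "mform_norm k T = Sup {\<bar>T w\<bar> | w. \<forall>i<k. norm (w i) \<le> 1}"

definition attains_norm_at :: "nat \<Rightarrow> ((nat \<Rightarrow> 'a::real_normed_vector) \<Rightarrow> real) \<Rightarrow> (nat \<Rightarrow> 'a) \<Rightarrow> bool" where
  "attains_norm_at k T x \<longleftrightarrow> \<bar>T x\<bar> = mform_norm k T"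

end

theory Submission
  imports Defs
begin

(*
  All x_i lie in a plane span {u, e} with u = x_0 and u, e orthonormal (e = 0 if they span
  only a line). The real-linear map L w = (w . u) + i (w . e) into the complex numbers is a
  contraction by Bessel's inequality and is isometric on that plane, so |L x_i| = 1. With
  z = prod_i L x_i, the form T w = Re (conj z * prod_i L w_i) is symmetric and k-linear with
  |T w| <= prod_i ||w_i|| and T x = |z|^2 = 1, so T attains its norm 1 at x.
*)

lemma independent_card_le_dim_finite:
  fixes S :: "'a::real_vector set"
  assumes "finite S" "independent A" "A \<subseteq> span S"
  shows "card A \<le> dim S"
proof -
  obtain B where B: "B \<subseteq> span S" "independent B" "span S \<subseteq> span B" "card B = dim (span S)"
    using basis_exists by blast
  have "finite B"
    using independent_span_bound[OF \<open>finite S\<close> B(2,1)] by blast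
  then have "card A \<le> card B"
    using independent_span_bound assms(2,3) B(3) by blast
  with B(4) show ?thesis by simp
qed

lemma card_ge_dim_independent_finite:
  fixes S :: "'a::real_vector set"
  assumes "finite S" "dim S \<le> card B" "independent B" "B \<subseteq> span S"
  shows "S \<subseteq> span B"
proof
  fix z assume "z \<in> S"
  show "z \<in> span B"
  proof (rule ccontr)
    assume z: "z \<notin> span B"
    have "finite B"
      using independent_span_bound[OF \<open>finite S\<close> assms(3,4)] by blast
    have "independent (insert z B)"
      using assms(3) z by (simp add: independent_insert)
    moreover have "insert z B \<subseteq> span S"
      using \<open>z \<in> S\<close> assms(4) by (auto intro: span_base)
    ultimately have "card (insert z B) \<le> dim S"
      using independent_card_le_dim_finite[OF \<open>finite S\<close>] by blast
    moreover have "card (insert z B) = card B + 1"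
      using \<open>finite B\<close> z span_base[of z B] by (auto simp: card_insert_if)
    ultimately show False
      using assms(2) by simp
  qed
qed

lemma subset_span_orthonormal_pair:
  fixes S :: "'a::real_inner set"
  assumes "finite S" "dim S \<le> 2" "u \<in> S" "norm u = 1"
  obtains e where "u \<bullet> e = 0" "e = 0 \<or> norm e = 1" "S \<subseteq> span {u, e}"
proof (cases "S \<subseteq> span {u}")
  case True
  then show ?thesis
    by (intro that[of 0]) (simp_all add: insert_commute)
next
  case False
  then obtain y where y: "y \<in> S" "y \<notin> span {u}" by blast
  define v where "v = y - (y \<bullet> u) *\<^sub>R u"
  have "v \<noteq> 0"
    using y(2) by (metis v_def eq_iff_diff_eq_0 span_base span_scale singletonI)
  define e where "e = v /\<^sub>R norm v"
  have "u \<bullet> u = 1"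
    using \<open>norm u = 1\<close> by (simp add: dot_square_norm)
  then have "u \<bullet> e = 0"
    by (simp add: e_def v_def inner_diff_right inner_commute)
  have "y = (y \<bullet> u) *\<^sub>R u + norm v *\<^sub>R e"
    using \<open>v \<noteq> 0\<close> by (simp add: e_def v_def)
  then have "y \<in> span {u, e}"
    by (metis span_add span_base span_scale insertI1 insert_commute)
  have "u \<noteq> y"
    using y(2) span_base[of u "{u}"] by auto
  have "independent (insert y {u})"
    using y(2) \<open>norm u = 1\<close> \<open>u \<noteq> y\<close> by (auto simp: independent_insert)
  then have "independent {u, y}"
    by (simp add: insert_commute)
  moreover have "{u, y} \<subseteq> span S"
    using \<open>u \<in> S\<close> y(1) by (auto intro: span_base)
  ultimately have "S \<subseteq> span {u, y}"
    using card_ge_dim_independent_finite[OF \<open>finite S\<close>] \<open>dim S \<le> 2\<close> \<open>u \<noteq> y\<close> by simp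
  also have "span {u, y} \<subseteq> span {u, e}"
    using \<open>y \<in> span {u, e}\<close> by (simp add: span_minimal span_base)
  finally show ?thesis
    using that[of e] \<open>u \<bullet> e = 0\<close> \<open>v \<noteq> 0\<close> by (simp add: e_def)
qed

definition plane_coords :: "'a::real_inner \<Rightarrow> 'a \<Rightarrow> 'a \<Rightarrow> complex" where
  "plane_coords u e w = Complex (w \<bullet> u) (w \<bullet> e)"

lemma linear_plane_coords: "linear (plane_coords u e)"
  by (intro linearI) (simp_all add: plane_coords_def complex_eq_iff inner_add_left)

lemma norm_diff_plane_projection:
  fixes u e w :: "'a::real_inner"
  assumes "norm u = 1" "u \<bullet> e = 0" "e = 0 \<or> norm e = 1"
  shows "(norm (w - ((w \<bullet> u) *\<^sub>R u + (w \<bullet> e) *\<^sub>R e)))\<^sup>2 = (norm w)\<^sup>2 - (cmod (plane_coords u e w))\<^sup>2"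
proof -
  define a b where "a = w \<bullet> u" and "b = w \<bullet> e"
  have "u \<bullet> u = 1" "b\<^sup>2 * (e \<bullet> e) = b\<^sup>2"
    using assms(1,3) by (auto simp: dot_square_norm b_def)
  have "(norm (w - (a *\<^sub>R u + b *\<^sub>R e)))\<^sup>2
      = w \<bullet> w - 2 * a * (w \<bullet> u) - 2 * b * (w \<bullet> e) + a\<^sup>2 * (u \<bullet> u) + b\<^sup>2 * (e \<bullet> e)
        + 2 * a * b * (u \<bullet> e)"
    unfolding power2_norm_eq_inner by (simp add: algebra_simps inner_commute power2_eq_square)
  also have "\<dots> = (norm w)\<^sup>2 - (a\<^sup>2 + b\<^sup>2)"
    using \<open>u \<bullet> u = 1\<close> \<open>b\<^sup>2 * (e \<bullet> e) = b\<^sup>2\<close> assms(2)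
    unfolding a_def[symmetric] b_def[symmetric] power2_norm_eq_inner by algebra
  finally show ?thesis
    by (simp add: a_def b_def plane_coords_def cmod_power2)
qed

lemma norm_plane_coords_le:
  fixes u e w :: "'a::real_inner"
  assumes "norm u = 1" "u \<bullet> e = 0" "e = 0 \<or> norm e = 1"
  shows "cmod (plane_coords u e w) \<le> norm w"
  using norm_diff_plane_projection[OF assms, of w]
  by (metis diff_ge_0_iff_ge norm_ge_zero power2_le_imp_le zero_le_power2)

lemma norm_plane_coords_eq:
  fixes u e w :: "'a::real_inner"
  assumes "norm u = 1" "u \<bullet> e = 0" "e = 0 \<or> norm e = 1" "w \<in> span {u, e}"
  shows "cmod (plane_coords u e w) = norm w"
proof -
  obtain a b where w: "w = a *\<^sub>R u + b *\<^sub>R e"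
    using assms(4) by (auto simp: span_insert span_singleton algebra_simps)
  have "u \<bullet> u = 1" "e \<bullet> e = 1 \<or> e = 0"
    using assms(1,3) by (auto simp: dot_square_norm)
  then have "(w \<bullet> u) *\<^sub>R u + (w \<bullet> e) *\<^sub>R e = w"
    using assms(2) unfolding w by (auto simp: inner_add_right inner_commute)
  then have "(cmod (plane_coords u e w))\<^sup>2 = (norm w)\<^sup>2"
    using norm_diff_plane_projection[OF assms(1-3), of w] by simp
  then show ?thesis
    by (simp add: power2_eq_iff_nonneg)
qed

definition re_product_form :: "('a \<Rightarrow> complex) \<Rightarrow> complex \<Rightarrow> nat \<Rightarrow> (nat \<Rightarrow> 'a) \<Rightarrow> real" where
  "re_product_form L c k w = Re (c * (\<Prod>i<k. L (w i)))"

lemma multilinear_form_re_product_form: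
  fixes L :: "'a::real_vector \<Rightarrow> complex"
  assumes "linear L"
  shows "multilinear_form k (re_product_form L c k)"
  unfolding multilinear_form_def
proof (intro conjI allI impI)
  fix w w' :: "nat \<Rightarrow> 'a" assume "\<forall>i<k. w i = w' i"
  then show "re_product_form L c k w = re_product_form L c k w'"
    by (simp add: re_product_form_def)
next
  fix i w assume "i < k"
  define P where "P = c * (\<Prod>j\<in>{..<k} - {i}. L (w j))"
  have "re_product_form L c k (w(i := v)) = Re (P * L v)" for v
  proof -
    have "(\<Prod>j<k. L ((w(i := v)) j)) = L v * (\<Prod>j\<in>{..<k} - {i}. L (w j))"
      using \<open>i < k\<close> by (subst prod.remove[of _ i]) (auto intro!: prod.cong)
    then show ?thesis
      by (simp add: re_product_form_def P_def mult_ac)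
  qed
  moreover have "linear (\<lambda>v. Re (P * L v))"
    using assms by (intro linearI) (simp_all add: linear_add linear_scale distrib_left)
  ultimately show "linear (\<lambda>v. re_product_form L c k (w(i := v)))"
    by simp
qed

lemma symmetric_mform_re_product_form: "symmetric_mform k (re_product_form L c k)"
  unfolding symmetric_mform_def re_product_form_def
proof (intro allI impI)
  fix \<sigma> and w :: "nat \<Rightarrow> 'a" assume "\<sigma> permutes {..<k}"
  then have "(\<Prod>i<k. L ((w \<circ> \<sigma>) i)) = (\<Prod>i<k. L (w i))"
    using prod.permute[of \<sigma> "{..<k}" "\<lambda>i. L (w i)"] by (simp add: comp_def)
  then show "Re (c * (\<Prod>i<k. L ((w \<circ> \<sigma>) i))) = Re (c * (\<Prod>i<k. L (w i)))"
    by simp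
qed

lemma abs_re_product_form_le:
  fixes L :: "'a::real_normed_vector \<Rightarrow> complex"
  assumes "\<And>w. cmod (L w) \<le> norm w"
  shows "\<bar>re_product_form L c k w\<bar> \<le> cmod c * (\<Prod>i<k. norm (w i))"
proof -
  have "\<bar>re_product_form L c k w\<bar> \<le> cmod (c * (\<Prod>i<k. L (w i)))"
    unfolding re_product_form_def by (rule abs_Re_le_cmod)
  also have "\<dots> = cmod c * (\<Prod>i<k. cmod (L (w i)))"
    by (simp add: norm_mult prod_norm)
  also have "\<dots> \<le> cmod c * (\<Prod>i<k. norm (w i))"
    by (intro mult_left_mono prod_mono) (simp_all add: assms)
  finally show ?thesis .
qed

lemma attains_norm_atI:
  fixes T :: "(nat \<Rightarrow> 'a::real_normed_vector) \<Rightarrow> real"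
  assumes "\<And>w. \<bar>T w\<bar> \<le> M * (\<Prod>i<k. norm (w i))" "\<forall>i<k. norm (x i) \<le> 1" "\<bar>T x\<bar> = M"
  shows "attains_norm_at k T x"
  unfolding attains_norm_at_def mform_norm_def
proof (rule sym, rule cSup_eq_maximum)
  show "\<bar>T x\<bar> \<in> {\<bar>T w\<bar> |w. \<forall>i<k. norm (w i) \<le> 1}"
    using assms(2) by blast
next
  fix y assume "y \<in> {\<bar>T w\<bar> |w. \<forall>i<k. norm (w i) \<le> 1}"
  then obtain w where "y = \<bar>T w\<bar>" "\<forall>i<k. norm (w i) \<le> 1" by blast
  then have "(\<Prod>i<k. norm (w i)) \<le> 1"
    by (intro prod_le_1) auto
  moreover have "M \<ge> 0"
    using assms(3) by auto
  ultimately show "y \<le> \<bar>T x\<bar>"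
    using assms(1)[of w] \<open>y = \<bar>T w\<bar>\<close> assms(3) mult_left_le[of _ M] by fastforce
qed

lemma norm_attaining_form_from_complex_contraction:
  fixes L :: "'a::real_normed_vector \<Rightarrow> complex" and x :: "nat \<Rightarrow> 'a"
  assumes "linear L" "\<And>w. cmod (L w) \<le> norm w"
    and "\<forall>i<k. norm (x i) = 1" "\<forall>i<k. cmod (L (x i)) = 1"
  shows "\<exists>T :: (nat \<Rightarrow> 'a) \<Rightarrow> real.
           multilinear_form k T \<and> bounded_mform k T \<and> symmetric_mform k T \<and>
           T \<noteq> (\<lambda>w. 0) \<and> attains_norm_at k T x"
proof -
  define z where "z = (\<Prod>i<k. L (x i))"
  define T where "T = re_product_form L (cnj z) k"
  have "cmod z = 1"
    using assms(4) by (simp add: z_def prod_norm[symmetric])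
  then have "T x = 1"
    by (simp add: T_def re_product_form_def z_def[symmetric] mult.commute[of "cnj z"]
        complex_norm_square[symmetric])
  have T_le: "\<bar>T w\<bar> \<le> 1 * (\<Prod>i<k. norm (w i))" for w
    using abs_re_product_form_le[OF assms(2), of "cnj z" k w] \<open>cmod z = 1\<close> by (simp add: T_def)
  have "multilinear_form k T" "symmetric_mform k T"
    using multilinear_form_re_product_form[OF assms(1)] symmetric_mform_re_product_form
    by (simp_all add: T_def)
  moreover have "bounded_mform k T"
    using T_le unfolding bounded_mform_def by blast
  moreover have "attains_norm_at k T x"
    using T_le assms(3) \<open>T x = 1\<close> by (intro attains_norm_atI) auto
  moreover have "T \<noteq> (\<lambda>w. 0)"
    using \<open>T x = 1\<close> by auto
  ultimately show ?thesis
    by blast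
qed

theorem proposition4p3:
  fixes x :: "nat \<Rightarrow> 'a::{real_inner, complete_space}" and k :: nat
  assumes "k \<ge> 1"
    and "\<forall>i<k. norm (x i) = 1"
    and "dim (span (x ` {..<k})) \<le> 2"
  shows "\<exists>T :: (nat \<Rightarrow> 'a) \<Rightarrow> real.
           multilinear_form k T \<and> bounded_mform k T \<and> symmetric_mform k T \<and>
           T \<noteq> (\<lambda>w. 0) \<and> attains_norm_at k T x"
proof -
  have "norm (x 0) = 1"
    using assms(1,2) by simp
  obtain e where e: "x 0 \<bullet> e = 0" "e = 0 \<or> norm e = 1" "x ` {..<k} \<subseteq> span {x 0, e}"
    using subset_span_orthonormal_pair[of "x ` {..<k}" "x 0"] assms \<open>norm (x 0) = 1\<close> by auto
  show ?thesis
  proof (rule norm_attaining_form_from_complex_contraction)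
    show "linear (plane_coords (x 0) e)"
      by (rule linear_plane_coords)
    show "cmod (plane_coords (x 0) e w) \<le> norm w" for w
      using norm_plane_coords_le \<open>norm (x 0) = 1\<close> e(1,2) .
    show "\<forall>i<k. cmod (plane_coords (x 0) e (x i)) = 1"
      using norm_plane_coords_eq[OF \<open>norm (x 0) = 1\<close> e(1,2)] e(3) assms(2) by auto
  qed (use assms(2) in simp)
qed

end
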